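(* Let $C$ be an extended ADE curve, $\chi>0$ an integer, and $H$ an ample line bundle on $C$ with $\sum_{o\in O}b_o=\chi+|O|-1$. Then: (i) $b_i=1$ for every $i\in I$. (ii) Let $J\subset O$ and let $f$ be a number with $0\le f\le e_I:=\sum_{i\in I}m_ie_i$, and assume that $J\subsetneq O$ or $f<e_I$. Then \[1-|J|+\sum_{j\in J}b_j>\frac{f+\sum_{j\in J}e_j}{e}\,\chi.\]
   Context: Work over $\mathbb C$. Let $X$ be a smooth projective surface and $C=\sum_{v\in V}m_vC_v\subset X$ an effective divisor with smooth irreducible components $C_v$, at most two through any point, meeting transversally. The labelled intersection graph $\Gamma$ has vertex set $V$, one edge per intersection point, label $m_v$. $C$ is an \emph{extended ADE curve} if (1) $\Gamma$ is one of: $\tilde A_n$: a cycle of $n+1$ vertices (two vertices, two edges if $n=1$), all labels $1$; $\tilde D_n$ ($n\ge4$): a chain of $n-3$ label-$2$ vertices with two label-$1$ vertices attached to each end (for $n=4$, one label-$2$ vertex with four label-$1$ neighbours); $\tilde E_6$: central label-$3$ vertex with three arms (label $2$ then $1$); $\tilde E_7$: chain $1,2,3,4,3,2,1$ plus a label-$2$ vertex on the label-$4$ vertex; $\tilde E_8$: chain $2,4,6,5,4,3,2,1$ plus a label-$3$ vertex on the label-$6$ vertex; (2) each $C_i$ with $m_i\ge2$ is a smooth rational $(-2)$-curve. $O$ = vertices of label $1$, $I=V\setminus O$. $e_v=\deg(H|_{C_v})$, $e=\sum_vm_ve_v$, $b_v=\lceil e_v\chi/e\rceil$. *)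

theory Defs
  imports "HOL-Library.Multiset" Complex_Main
begin

text \<open>At n : cycle of n+1 vertices (n \<ge> 1), Dt n : n \<ge> 4, and E6, E7, E8.
  Standard models have vertex set {0..<length (ade_labels t)}; vertex k carries
  label ade_labels t ! k; edges form a multiset of 2-element vertex sets
  (multiset since for At 1 there are two edges between the two vertices).\<close>

datatype ade_type = At nat | Dt nat | Et6 | Et7 | Et8

fun ade_valid :: "ade_type \<Rightarrow> bool" where
  "ade_valid (At n) = (n \<ge> 1)"
| "ade_valid (Dt n) = (n \<ge> 4)"
| "ade_valid Et6 = True"
| "ade_valid Et7 = True"
| "ade_valid Et8 = True"

fun ade_labels :: "ade_type \<Rightarrow> nat list" where
  "ade_labels (At n) = replicate (n + 1) 1"
| "ade_labels (Dt n) = replicate (n - 3) 2 @ [1, 1, 1, 1]"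
| "ade_labels Et6 = [3, 2, 1, 2, 1, 2, 1]"
| "ade_labels Et7 = [1, 2, 3, 4, 3, 2, 1, 2]"
| "ade_labels Et8 = [2, 4, 6, 5, 4, 3, 2, 1, 3]"

fun ade_edges :: "ade_type \<Rightarrow> nat set multiset" where
  "ade_edges (At n) = mset (map (\<lambda>i. {i, (i + 1) mod (n + 1)}) [0..<n + 1])"
| "ade_edges (Dt n) = mset (map (\<lambda>i. {i, i + 1}) [0..<n - 4])
      + {# {0, n - 3}, {0, n - 2}, {n - 4, n - 1}, {n - 4, n} #}"
| "ade_edges Et6 = {# {0,1}, {1,2}, {0,3}, {3,4}, {0,5}, {5,6} #}"
| "ade_edges Et7 = {# {0,1}, {1,2}, {2,3}, {3,4}, {4,5}, {5,6}, {3,7} #}"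
| "ade_edges Et8 = {# {0,1}, {1,2}, {2,3}, {3,4}, {4,5}, {5,6}, {6,7}, {2,8} #}"

definition ext_ADE_graph :: "'v set \<Rightarrow> 'v set multiset \<Rightarrow> ('v \<Rightarrow> nat) \<Rightarrow> bool" where
  "ext_ADE_graph V E m \<longleftrightarrow>
     (\<forall>ed \<in># E. ed \<subseteq> V) \<and>
     (\<exists>t \<phi>. ade_valid t \<and> bij_betw \<phi> V {0..<length (ade_labels t)} \<and>
        (\<forall>v\<in>V. m v = ade_labels t ! \<phi> v) \<and>
        image_mset (\<lambda>ed. \<phi> ` ed) E = ade_edges t)"

definition ade_O :: "'v set \<Rightarrow> ('v \<Rightarrow> nat) \<Rightarrow> 'v set" where
  "ade_O V m = {v \<in> V. m v = 1}"

definition ade_I :: "'v set \<Rightarrow> ('v \<Rightarrow> nat) \<Rightarrow> 'v set" where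
  "ade_I V m = V - ade_O V m"

text \<open>e = sum of m_v e_v, where deg v = e_v = deg(H restricted to C_v).\<close>
definition ade_e :: "'v set \<Rightarrow> ('v \<Rightarrow> nat) \<Rightarrow> ('v \<Rightarrow> int) \<Rightarrow> int" where
  "ade_e V m deg = (\<Sum>v\<in>V. int (m v) * deg v)"

definition ade_b :: "'v set \<Rightarrow> ('v \<Rightarrow> nat) \<Rightarrow> ('v \<Rightarrow> int) \<Rightarrow> int \<Rightarrow> 'v \<Rightarrow> int" where
  "ade_b V m deg chi v = \<lceil>real_of_int (deg v) * real_of_int chi / real_of_int (ade_e V m deg)\<rceil>"

end

theory Submission
  imports Defs
begin

text \<open>Put \<open>x\<^sub>v = e\<^sub>v \<chi> / e\<close>, so that \<open>b\<^sub>v = \<lceil>x\<^sub>v\<rceil>\<close> and \<open>\<Sum>\<^sub>v m\<^sub>v x\<^sub>v = \<chi>\<close>. The hypothesis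
  on \<open>\<Sum>\<^sub>O b\<^sub>o\<close> then says that the rounding defects \<open>b\<^sub>o - x\<^sub>o \<in> [0, 1)\<close> of the outer vertices add
  up to \<open>|O| - 1 + r\<close> with \<open>r = e\<^sub>I \<chi> / e\<close>. Hence \<open>r \<le> 1\<close>; as \<open>m\<^sub>i \<ge> 2\<close> on \<open>I\<close>, this forces
  \<open>0 < x\<^sub>i \<le> 1/2\<close> and so \<open>b\<^sub>i = 1\<close>. For (ii), the defects over \<open>O - J\<close> add up to at most
  \<open>|O - J|\<close>, strictly less if \<open>J \<noteq> O\<close>, so those over \<open>J\<close> add up to at least
  \<open>|J| - 1 + r \<ge> |J| - 1 + f \<chi> / e\<close>, and one of the two inequalities is strict.\<close>

lemma ceiling_defect_less_one: "of_int \<lceil>x\<rceil> - x < (1::real)"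
  using ceiling_correct[of x] by linarith

lemma sum_ceiling_defect_le:
  fixes x :: "'a \<Rightarrow> real"
  shows "(\<Sum>a\<in>A. of_int \<lceil>x a\<rceil> - x a) \<le> real (card A)"
  using sum_bounded_above[of A "\<lambda>a. of_int \<lceil>x a\<rceil> - x a" 1] ceiling_defect_less_one
  by (simp add: less_imp_le)

lemma sum_ceiling_defect_less:
  fixes x :: "'a \<Rightarrow> real"
  assumes "finite A" and "A \<noteq> {}"
  shows "(\<Sum>a\<in>A. of_int \<lceil>x a\<rceil> - x a) < real (card A)"
  using sum_bounded_above_strict[of A "\<lambda>a. of_int \<lceil>x a\<rceil> - x a" 1] ceiling_defect_less_one assms
  by (simp add: card_gt_0_iff)

lemma ceiling_defect_excess_le_one:
  fixes x :: "'a \<Rightarrow> real"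
  assumes "(\<Sum>a\<in>A. of_int \<lceil>x a\<rceil> - x a) = r + real (card A) - 1"
  shows "r \<le> 1"
  using sum_ceiling_defect_le[of x A] assms by linarith

lemma ceiling_defect_partial_sum:
  fixes x :: "'a \<Rightarrow> real"
  assumes "finite A" and "J \<subseteq> A"
    and defect: "(\<Sum>a\<in>A. of_int \<lceil>x a\<rceil> - x a) = r + real (card A) - 1"
    and "f \<le> r" and "J \<noteq> A \<or> f < r"
  shows "f + (\<Sum>j\<in>J. x j) < 1 - real (card J) + (\<Sum>j\<in>J. of_int \<lceil>x j\<rceil>)"
proof -
  let ?d = "\<lambda>a. of_int \<lceil>x a\<rceil> - x a"
  have "finite J" using assms(1,2) finite_subset by blast
  have split: "(\<Sum>a\<in>A. ?d a) = (\<Sum>j\<in>J. ?d j) + (\<Sum>a\<in>A - J. ?d a)"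
    using assms(1,2) by (metis sum.subset_diff add.commute)
  have card: "real (card A) = real (card J) + real (card (A - J))"
    using assms(1,2) \<open>finite J\<close> by (simp add: card_Diff_subset card_mono of_nat_diff)
  have rest: "(\<Sum>a\<in>A - J. ?d a) \<le> real (card (A - J))"
    by (rule sum_ceiling_defect_le)
  have rest_strict: "(\<Sum>a\<in>A - J. ?d a) < real (card (A - J))" if "J \<noteq> A"
    using that assms(1,2) by (intro sum_ceiling_defect_less) auto
  have "f + real (card J) - 1 < (\<Sum>j\<in>J. ?d j)"
    using assms(4,5) defect split card rest rest_strict by fastforce
  moreover have "(\<Sum>j\<in>J. ?d j) = (\<Sum>j\<in>J. of_int \<lceil>x j\<rceil>) - (\<Sum>j\<in>J. x j)"
    by (rule sum_subtractf)
  ultimately show ?thesis by linarith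
qed

definition ade_eI :: "'v set \<Rightarrow> ('v \<Rightarrow> nat) \<Rightarrow> ('v \<Rightarrow> int) \<Rightarrow> int" where
  "ade_eI V m deg = (\<Sum>i\<in>ade_I V m. int (m i) * deg i)"

definition ade_x :: "'v set \<Rightarrow> ('v \<Rightarrow> nat) \<Rightarrow> ('v \<Rightarrow> int) \<Rightarrow> int \<Rightarrow> 'v \<Rightarrow> real" where
  "ade_x V m deg chi v = real_of_int (deg v) * real_of_int chi / real_of_int (ade_e V m deg)"

lemma ade_b_eq_ceiling: "ade_b V m deg chi v = \<lceil>ade_x V m deg chi v\<rceil>"
  by (simp add: ade_b_def ade_x_def)

lemma ade_e_split:
  assumes "finite V"
  shows "ade_e V m deg = (\<Sum>w\<in>ade_O V m. deg w) + ade_eI V m deg"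
proof -
  have "V = ade_O V m \<union> ade_I V m" and "ade_O V m \<inter> ade_I V m = {}"
    by (auto simp: ade_O_def ade_I_def)
  then have "ade_e V m deg = (\<Sum>w\<in>ade_O V m. int (m w) * deg w) + ade_eI V m deg"
    using assms unfolding ade_e_def ade_eI_def
    by (metis finite_Un sum.union_disjoint)
  also have "(\<Sum>w\<in>ade_O V m. int (m w) * deg w) = (\<Sum>w\<in>ade_O V m. deg w)"
    by (intro sum.cong) (auto simp: ade_O_def)
  finally show ?thesis .
qed

lemma ade_e_pos:
  assumes "finite V" and "V \<noteq> {}" and "\<forall>v\<in>V. m v \<ge> 1" and "\<forall>v\<in>V. deg v > 0"
  shows "ade_e V m deg > 0"
  unfolding ade_e_def using assms by (intro sum_pos) auto

lemma ade_O_ceiling_defect_sum: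
  assumes "finite V" and "ade_e V m deg \<noteq> 0"
    and "(\<Sum>w\<in>ade_O V m. ade_b V m deg chi w) = chi + int (card (ade_O V m)) - 1"
  shows "(\<Sum>w\<in>ade_O V m. of_int \<lceil>ade_x V m deg chi w\<rceil> - ade_x V m deg chi w) =
    real_of_int (ade_eI V m deg) * real_of_int chi / real_of_int (ade_e V m deg)
      + real (card (ade_O V m)) - 1"
proof -
  let ?O = "ade_O V m" and ?e = "real_of_int (ade_e V m deg)"
  have ceil: "(\<Sum>w\<in>?O. real_of_int \<lceil>ade_x V m deg chi w\<rceil>) = real_of_int chi + real (card ?O) - 1"
    using assms(3) unfolding ade_b_eq_ceiling
    by (metis of_int_of_nat_eq of_int_sum of_int_add of_int_diff of_int_1)
  have "(\<Sum>w\<in>?O. ade_x V m deg chi w) = real_of_int (\<Sum>w\<in>?O. deg w) * real_of_int chi / ?e"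
    unfolding ade_x_def by (simp add: sum_divide_distrib sum_distrib_right)
  also have "\<dots> = real_of_int chi - real_of_int (ade_eI V m deg) * real_of_int chi / ?e"
  proof -
    have "real_of_int (\<Sum>w\<in>?O. deg w) = ?e - real_of_int (ade_eI V m deg)"
      using ade_e_split[OF assms(1), of m deg] by simp
    with assms(2) show ?thesis by (simp add: field_simps) (metis distrib_left)
  qed
  finally show ?thesis using ceil by (simp add: sum_subtractf)
qed

lemma ade_b_inner_eq_1:
  assumes "finite V" and "\<forall>v\<in>V. m v \<ge> 1" and "\<forall>v\<in>V. deg v > 0" and "chi > 0"
    and "ade_e V m deg > 0"
    and sum_b: "(\<Sum>w\<in>ade_O V m. ade_b V m deg chi w) = chi + int (card (ade_O V m)) - 1"
    and i: "i \<in> ade_I V m"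
  shows "ade_b V m deg chi i = 1"
proof -
  let ?x = "ade_x V m deg chi i" and ?c = "real_of_int chi / real_of_int (ade_e V m deg)"
  have r_le: "real_of_int (ade_eI V m deg) * ?c \<le> 1"
    using ceiling_defect_excess_le_one[OF ade_O_ceiling_defect_sum[OF assms(1) _ sum_b]] assms(5)
    by simp
  have iV: "i \<in> V" and "m i \<ge> 2"
    using i assms(2) by (force simp: ade_I_def ade_O_def)+
  have "?x > 0"
    unfolding ade_x_def using iV assms(3-5) by simp
  have "int (m i) * deg i \<le> ade_eI V m deg"
    unfolding ade_eI_def using assms(1,3) i
    by (intro member_le_sum) (auto simp: ade_I_def intro: finite_subset)
  then have "real (m i) * real_of_int (deg i) \<le> real_of_int (ade_eI V m deg)"
    by (metis of_int_le_iff of_int_mult of_int_of_nat_eq)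
  then have "real (m i) * real_of_int (deg i) * ?c \<le> real_of_int (ade_eI V m deg) * ?c"
    using assms(4,5) by (intro mult_right_mono) simp_all
  then have "real (m i) * ?x \<le> 1"
    using r_le unfolding ade_x_def by (simp add: mult.assoc)
  moreover have "2 * ?x \<le> real (m i) * ?x"
    using \<open>m i \<ge> 2\<close> \<open>?x > 0\<close> by (intro mult_right_mono) auto
  ultimately have "?x < 1" by linarith
  with \<open>?x > 0\<close> show ?thesis
    unfolding ade_b_eq_ceiling by (simp add: ceiling_eq_iff)
qed

lemma ade_b_partial_sum_gt:
  fixes f :: real
  assumes "finite V" and "chi > 0" and "ade_e V m deg > 0"
    and sum_b: "(\<Sum>w\<in>ade_O V m. ade_b V m deg chi w) = chi + int (card (ade_O V m)) - 1"
    and J: "J \<subseteq> ade_O V m" and "f \<le> real_of_int (ade_eI V m deg)"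
    and "J \<noteq> ade_O V m \<or> f < real_of_int (ade_eI V m deg)"
  shows "(f + real_of_int (\<Sum>j\<in>J. deg j)) / real_of_int (ade_e V m deg) * real_of_int chi <
    real_of_int (1 - int (card J) + (\<Sum>j\<in>J. ade_b V m deg chi j))"
proof -
  let ?e = "real_of_int (ade_e V m deg)" and ?eI = "real_of_int (ade_eI V m deg)"
  have "finite (ade_O V m)" using assms(1) by (simp add: ade_O_def)
  have defect: "(\<Sum>w\<in>ade_O V m. of_int \<lceil>ade_x V m deg chi w\<rceil> - ade_x V m deg chi w) =
      ?eI * chi / ?e + real (card (ade_O V m)) - 1"
    using ade_O_ceiling_defect_sum[OF assms(1) _ sum_b] assms(3) by simp
  have "f * chi / ?e \<le> ?eI * chi / ?e"
    using assms(2,3,6) by (simp add: divide_right_mono mult_right_mono)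
  moreover have "f * chi / ?e < ?eI * chi / ?e" if "f < ?eI"
    using that assms(2,3) by (simp add: divide_strict_right_mono)
  ultimately have "f * chi / ?e + (\<Sum>j\<in>J. ade_x V m deg chi j)
      < 1 - real (card J) + (\<Sum>j\<in>J. of_int \<lceil>ade_x V m deg chi j\<rceil>)"
    using assms(7) by (intro ceiling_defect_partial_sum[OF \<open>finite (ade_O V m)\<close> J defect]) auto
  then show ?thesis
    unfolding ade_b_eq_ceiling ade_x_def using assms(3)
    by (simp add: field_simps sum_divide_distrib sum_distrib_left sum_distrib_right)
qed

lemma ext_ADE_graph_finite_nonempty_labels_pos:
  assumes "ext_ADE_graph V E m"
  shows "finite V" and "V \<noteq> {}" and "\<forall>v\<in>V. m v \<ge> 1"
proof -
  from assms obtain t \<phi> where t: "ade_valid t"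
    and \<phi>: "bij_betw \<phi> V {0..<length (ade_labels t)}"
    and lab: "\<forall>v\<in>V. m v = ade_labels t ! \<phi> v"
    unfolding ext_ADE_graph_def by blast
  show "finite V" using \<phi> bij_betw_finite by blast
  have "length (ade_labels t) > 0" using t by (cases t) auto
  then show "V \<noteq> {}" using \<phi> by (auto simp: bij_betw_def)
  have "\<forall>k\<in>set (ade_labels t). k \<ge> 1" by (cases t) auto
  then show "\<forall>v\<in>V. m v \<ge> 1"
    using \<phi> lab by (metis atLeastLessThan_iff bij_betw_apply nth_mem)
qed

theorem lemma3p13:
  fixes V :: "'v set" and E :: "'v set multiset" and m :: "'v \<Rightarrow> nat"
    and deg :: "'v \<Rightarrow> int" and chi :: int
  assumes ADE: "ext_ADE_graph V E m"
    and chi_pos: "chi > 0"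
    and ample: "\<forall>v\<in>V. deg v > 0"
    and sum_b: "(\<Sum>w\<in>ade_O V m. ade_b V m deg chi w) = chi + int (card (ade_O V m)) - 1"
  shows "(\<forall>i\<in>ade_I V m. ade_b V m deg chi i = 1) \<and>
         (\<forall>J (f::real). J \<subseteq> ade_O V m \<longrightarrow> 0 \<le> f \<longrightarrow>
            f \<le> real_of_int (\<Sum>i\<in>ade_I V m. int (m i) * deg i) \<longrightarrow>
            (J \<noteq> ade_O V m \<or> f < real_of_int (\<Sum>i\<in>ade_I V m. int (m i) * deg i)) \<longrightarrow>
            real_of_int (1 - int (card J) + (\<Sum>j\<in>J. ade_b V m deg chi j)) >
              (f + real_of_int (\<Sum>j\<in>J. deg j)) / real_of_int (ade_e V m deg) * real_of_int chi)"
proof -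
  note V = ext_ADE_graph_finite_nonempty_labels_pos[OF ADE]
  have e_pos: "ade_e V m deg > 0" using ade_e_pos V ample by blast
  show ?thesis
    using ade_b_inner_eq_1[OF V(1,3) ample chi_pos e_pos sum_b]
      ade_b_partial_sum_gt[OF V(1) chi_pos e_pos sum_b]
    unfolding ade_eI_def by blast
qed

end
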